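(* Let $\mu\in C^1[0,1]$ with $\mu\ge0$ and $\mu(1)\ne0$, and let $\Phi(z)=\int_0^1\mu(\alpha)z^\alpha\,d\alpha$. Then for every $z$ with $\operatorname{Re}z=\gamma>0$, $\operatorname{Re}(\Phi^{1/2}(z))\ge\frac{\sqrt2}{2}|\Phi^{1/2}(z)|$.
   Context: Powers $z^\alpha$ and $\Phi^{1/2}$ use the principal branch, with $\arg z\in(-\pi,\pi]$. *)

theory Defs
  imports "HOL-Analysis.Analysis"
begin

definition C1_on_unit :: "(real \<Rightarrow> real) \<Rightarrow> bool" where
  "C1_on_unit \<mu> \<longleftrightarrow> (\<exists>\<mu>'. (\<forall>x\<in>{0..1}. (\<mu> has_real_derivative \<mu>' x) (at x within {0..1}))
                         \<and> continuous_on {0..1} \<mu>')"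

definition Phi :: "(real \<Rightarrow> real) \<Rightarrow> complex \<Rightarrow> complex" where
  "Phi \<mu> z = integral {0..1} (\<lambda>\<alpha>. complex_of_real (\<mu> \<alpha>) * z powr complex_of_real \<alpha>)"

end

theory Submission
  imports Defs
begin

text \<open>For \<open>Re z > 0\<close> and \<open>\<alpha> \<in> [0,1]\<close> the argument of \<open>z\<^sup>\<alpha>\<close> lies in \<open>[-\<pi>/2, \<pi>/2]\<close>, so
  \<open>\<Phi>(z)\<close>, a nonnegative combination of such powers, lies in the closed right half-plane.
  The principal square root halves the argument of a point of that half-plane into
  \<open>[-\<pi>/4, \<pi>/4]\<close>, which is exactly the claimed bound.\<close>

lemma Re_powr_nonneg:
  fixes z :: complex and a :: real
  assumes "0 \<le> Re z" "0 \<le> a" "a \<le> 1"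
  shows "0 \<le> Re (z powr complex_of_real a)"
proof (cases "z = 0")
  case False
  have "\<bar>Im (Ln z)\<bar> \<le> pi/2"
    using Re_Ln_pos_le assms(1) False by blast
  then have "\<bar>a * Im (Ln z)\<bar> \<le> 1 * (pi/2)"
    unfolding abs_mult using assms(2,3) by (intro mult_mono) auto
  then have "0 \<le> cos (a * Im (Ln z))"
    by (intro cos_ge_zero) auto
  then show ?thesis
    using False by (simp add: powr_def Re_exp)
qed simp

lemma Re_integral_nonneg:
  fixes f :: "'a::euclidean_space \<Rightarrow> complex"
  assumes "\<And>x. x \<in> S \<Longrightarrow> 0 \<le> Re (f x)"
  shows "0 \<le> Re (integral S f)"
proof (cases "f integrable_on S")
  case True
  then have "((\<lambda>x. Re (f x)) has_integral Re (integral S f)) S"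
    by (intro has_integral_Re) (rule integrable_integral)
  then show ?thesis
    using assms by (rule has_integral_nonneg)
qed (simp add: not_integrable_integral)

lemma Re_sqrt_ge_cmod:
  fixes w :: complex
  assumes "0 \<le> Re w"
  shows "sqrt 2 / 2 * cmod (w powr (1/2)) \<le> Re (w powr (1/2))"
proof (cases "w = 0")
  case False
  have "\<bar>Im (Ln w)\<bar> \<le> pi/2"
    using Re_Ln_pos_le assms False by blast
  then have "cos (pi/4) \<le> cos \<bar>Im (Ln w) / 2\<bar>"
    by (intro cos_monotone_0_pi_le) auto
  then have half_arg: "sqrt 2 / 2 \<le> cos (Im (Ln w) / 2)"
    by (simp add: cos_45 abs_if split: if_splits)
  have root: "w powr (1/2) = exp (Ln w / 2)"
    using False by (simp add: powr_def)
  show ?thesis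
    using half_arg by (simp add: root Re_exp mult.commute mult_left_mono)
qed simp

theorem mainTheorem4:
  fixes \<mu> :: "real \<Rightarrow> real" and z :: complex
  assumes "C1_on_unit \<mu>"
    and "\<forall>\<alpha>\<in>{0..1}. \<mu> \<alpha> \<ge> 0"
    and "\<mu> 1 \<noteq> 0"
    and "Re z > 0"
  shows "Re (Phi \<mu> z powr (1/2)) \<ge> sqrt 2 / 2 * cmod (Phi \<mu> z powr (1/2))"
proof -
  have "0 \<le> Re (Phi \<mu> z)"
    unfolding Phi_def
    using assms(2,4) by (intro Re_integral_nonneg) (simp add: Re_powr_nonneg)
  then show ?thesis
    by (rule Re_sqrt_ge_cmod)
qed

end
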